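(* Let $F:\mathbb{R}^d\to\mathbb{R}^d$ be $L$-Lipschitz, let $x^*$ satisfy $F(x^* )=0$, and suppose $F$ satisfies the weak Minty condition with parameter $0<\rho<\frac1{2L}$. Consider the deterministic past extragradient method: given $x_0$, $\hat x_{-1}=x_0$, and for $k\ge0$, $\hat x_k=x_k-\gamma F(\hat x_{k-1})$, $x_{k+1}=x_k-\omega F(\hat x_k)$, with $$\max\Big\{2\rho,\frac1{2L}\Big\}<\gamma<\frac1L,\qquad 0<\omega<\min\Big\{\gamma-2\rho,\frac1{4L}-\frac\gamma4\Big\}.$$ Then for all $K\ge2$, $$\min_{0\le k\le K-1}\|F(\hat x_k)\|^2\le\frac{C\|x_0-x^*\|^2}{K-1},\qquad C=\frac{48}{\omega\gamma(1-L(\gamma+4\omega))}.$$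
   Context: $L$-Lipschitz: $\|F(x)-F(y)\|\le L\|x-y\|$. Weak Minty condition with parameter $\rho>0$: $\langle F(x),x-x^*\rangle\ge-\rho\|F(x)\|^2$ for all $x$. (This is the deterministic case $\delta=0$, $\sigma_*^2=0$ of stochastic past extragradient.) *)

theory Defs
  imports "HOL-Analysis.Analysis"
begin

text \<open>Deterministic past extragradient. The state at step k is the pair
  (x_k, xhat_{k-1}), with xhat_{-1} = x_0.\<close>
fun pe_state :: "('a::real_vector \<Rightarrow> 'a) \<Rightarrow> real \<Rightarrow> real \<Rightarrow> 'a \<Rightarrow> nat \<Rightarrow> 'a \<times> 'a" where
  "pe_state F \<gamma> \<omega> x0 0 = (x0, x0)"
| "pe_state F \<gamma> \<omega> x0 (Suc k) =
     (let (x, hp) = pe_state F \<gamma> \<omega> x0 k; xh = x - \<gamma> *\<^sub>R F hp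
      in (x - \<omega> *\<^sub>R F xh, xh))"

definition pe_x :: "('a::real_vector \<Rightarrow> 'a) \<Rightarrow> real \<Rightarrow> real \<Rightarrow> 'a \<Rightarrow> nat \<Rightarrow> 'a" where
  "pe_x F \<gamma> \<omega> x0 k = fst (pe_state F \<gamma> \<omega> x0 k)"

definition pe_xhat :: "('a::real_vector \<Rightarrow> 'a) \<Rightarrow> real \<Rightarrow> real \<Rightarrow> 'a \<Rightarrow> nat \<Rightarrow> 'a" where
  "pe_xhat F \<gamma> \<omega> x0 k = snd (pe_state F \<gamma> \<omega> x0 (Suc k))"

lemma pe_xhat_rec:
  "pe_xhat F \<gamma> \<omega> x0 0 = x0 - \<gamma> *\<^sub>R F x0"
  "pe_xhat F \<gamma> \<omega> x0 (Suc k) = pe_x F \<gamma> \<omega> x0 (Suc k) - \<gamma> *\<^sub>R F (pe_xhat F \<gamma> \<omega> x0 k)"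
  "pe_x F \<gamma> \<omega> x0 (Suc k) = pe_x F \<gamma> \<omega> x0 k - \<omega> *\<^sub>R F (pe_xhat F \<gamma> \<omega> x0 k)"
  by (auto simp: pe_xhat_def pe_x_def Let_def split: prod.splits)

end

theory Submission
  imports Defs
begin

text \<open>A Lyapunov argument. Write g k = F(xhat_(k-1)), so g 0 = F(x_0). The potential
  |x_k - x*|^2 + c |g (k+1) - g k|^2 with c = 8\<omega>\<gamma> / (7(1 - L\<gamma>)) decreases by at least
  (6/7) \<omega>\<gamma> |g k|^2 per step. The weak Minty condition and polarisation bound the distance
  term, at the price of \<omega>\<gamma> |g (k+1) - g k|^2; Lipschitz continuity and the weighted Young
  inequality at s = L\<gamma> contract the difference term by the factor L\<gamma>, and c is chosen so
  that c (1 - L\<gamma>) pays for both error terms. Telescoping from a potential of at most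
  (9/7) |x_0 - x*|^2 gives min_(k<K) |F(xhat_k)|^2 \<le> 3 |x_0 - x*|^2 / (2\<omega>\<gamma>K), which is
  stronger than the stated bound.\<close>

lemma power2_sum_le_weighted:
  fixes a b s :: real
  assumes "0 < s" "s < 1"
  shows "(a + b)\<^sup>2 \<le> a\<^sup>2 / (1 - s) + b\<^sup>2 / s"
proof -
  have "s * (1 - s) * (a + b)\<^sup>2 \<le> s * a\<^sup>2 + (1 - s) * b\<^sup>2"
    using zero_le_power2[of "s * a - (1 - s) * b"] by (simp add: power2_eq_square algebra_simps)
  with assms show ?thesis
    by (simp add: field_simps)
qed

lemma power2_norm_le_double:
  fixes u v :: "'a::real_normed_vector"
  shows "(norm v)\<^sup>2 \<le> 2 * (norm u)\<^sup>2 + 2 * (norm (v - u))\<^sup>2"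
proof -
  have "norm v \<le> norm u + norm (v - u)"
    using norm_triangle_ineq[of u "v - u"] by simp
  then have "(norm v)\<^sup>2 \<le> (norm u + norm (v - u))\<^sup>2"
    by (simp add: power_mono)
  also have "\<dots> \<le> 2 * (norm u)\<^sup>2 + 2 * (norm (v - u))\<^sup>2"
    using power2_sum_le_weighted[of "1/2" "norm u" "norm (v - u)"] by (simp add: mult.commute)
  finally show ?thesis .
qed

lemma power2_norm_diff_scaleR:
  fixes u v :: "'a::real_inner"
  shows "(norm (u - w *\<^sub>R v))\<^sup>2 = (norm u)\<^sup>2 - 2 * w * inner v u + w\<^sup>2 * (norm v)\<^sup>2"
  unfolding power2_norm_eq_inner
  by (simp add: inner_commute algebra_simps power2_eq_square)

lemma pe_state_recurrence:
  "snd (pe_state F \<gamma> \<omega> x0 0) = pe_x F \<gamma> \<omega> x0 0"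
  "snd (pe_state F \<gamma> \<omega> x0 (Suc k)) = pe_x F \<gamma> \<omega> x0 k - \<gamma> *\<^sub>R F (snd (pe_state F \<gamma> \<omega> x0 k))"
  "pe_x F \<gamma> \<omega> x0 (Suc k) = pe_x F \<gamma> \<omega> x0 k - \<omega> *\<^sub>R F (snd (pe_state F \<gamma> \<omega> x0 (Suc k)))"
  by (simp_all add: pe_x_def Let_def split: prod.splits)

locale past_extragradient_weak_minty =
  fixes F :: "'a::real_inner \<Rightarrow> 'a" and xstar :: 'a and L \<rho> \<gamma> \<omega> :: real
    and x xh :: "nat \<Rightarrow> 'a"
  assumes lipschitz: "\<And>u v. norm (F u - F v) \<le> L * norm (u - v)"
    and weak_minty: "\<And>u. inner (F u) (u - xstar) \<ge> - \<rho> * (norm (F u))\<^sup>2"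
    and root: "F xstar = 0"
    and xh_0: "xh 0 = x 0"
    and xh_Suc: "\<And>k. xh (Suc k) = x k - \<gamma> *\<^sub>R F (xh k)"
    and x_Suc: "\<And>k. x (Suc k) = x k - \<omega> *\<^sub>R F (xh (Suc k))"
    and L_pos: "0 < L" and gamma_pos: "0 < \<gamma>" and L_gamma_lt_1: "L * \<gamma> < 1"
    and omega_pos: "0 < \<omega>" and omega_le_gamma: "\<omega> \<le> \<gamma> - 2 * \<rho>"
    and L_gamma_omega_le_1: "L * (\<gamma> + 4 * \<omega>) \<le> 1"
begin

lemma dist_sq_Suc_le:
  "(norm (x (Suc k) - xstar))\<^sup>2 \<le> (norm (x k - xstar))\<^sup>2 - \<omega> * \<gamma> * (norm (F (xh k)))\<^sup>2
     + \<omega> * \<gamma> * (norm (F (xh (Suc k)) - F (xh k)))\<^sup>2"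
proof -
  define u where "u = x k - xstar"
  define v where "v = F (xh (Suc k))"
  define m where "m = inner v (xh (Suc k) - xstar)"
  have minty_v: "2 * \<omega> * m \<ge> - 2 * \<omega> * \<rho> * (norm v)\<^sup>2"
    using mult_left_mono[OF weak_minty[of "xh (Suc k)"], of "2 * \<omega>"] omega_pos
    by (simp add: m_def v_def)
  have polar: "2 * inner v (F (xh k)) = (norm v)\<^sup>2 + (norm (F (xh k)))\<^sup>2 - (norm (v - F (xh k)))\<^sup>2"
    by (simp add: dot_norm_neg)
  have "(norm (x (Suc k) - xstar))\<^sup>2 = (norm u)\<^sup>2 - 2 * \<omega> * inner v u + \<omega>\<^sup>2 * (norm v)\<^sup>2"
    using power2_norm_diff_scaleR[of u \<omega> v] by (simp add: u_def v_def x_Suc algebra_simps)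
  also have "\<dots> = (norm u)\<^sup>2 - 2 * \<omega> * m - \<omega> * \<gamma> * (2 * inner v (F (xh k))) + \<omega>\<^sup>2 * (norm v)\<^sup>2"
    by (simp add: u_def m_def xh_Suc algebra_simps)
  also have "\<dots> \<le> (norm u)\<^sup>2 + 2 * \<omega> * \<rho> * (norm v)\<^sup>2
      - \<omega> * \<gamma> * ((norm v)\<^sup>2 + (norm (F (xh k)))\<^sup>2 - (norm (v - F (xh k)))\<^sup>2)
      + \<omega>\<^sup>2 * (norm v)\<^sup>2"
    unfolding polar using minty_v by linarith
  also have "\<dots> = (norm u)\<^sup>2 - \<omega> * \<gamma> * (norm (F (xh k)))\<^sup>2
      + \<omega> * \<gamma> * (norm (v - F (xh k)))\<^sup>2 - \<omega> * (\<gamma> - 2 * \<rho> - \<omega>) * (norm v)\<^sup>2"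
    by (simp add: algebra_simps power2_eq_square)
  also have "\<dots> \<le> (norm u)\<^sup>2 - \<omega> * \<gamma> * (norm (F (xh k)))\<^sup>2
      + \<omega> * \<gamma> * (norm (v - F (xh k)))\<^sup>2"
    using omega_pos omega_le_gamma by simp
  finally show ?thesis by (simp add: u_def v_def)
qed

lemma operator_diff_sq_Suc_le:
  "(norm (F (xh (Suc (Suc k))) - F (xh (Suc k))))\<^sup>2
     \<le> L * \<gamma> * (norm (F (xh (Suc k)) - F (xh k)))\<^sup>2
       + (L * \<omega>)\<^sup>2 / (1 - L * \<gamma>) * (norm (F (xh (Suc k))))\<^sup>2"
proof -
  define n where "n = norm (F (xh (Suc k)))"
  define d where "d = norm (F (xh (Suc k)) - F (xh k))"
  have "xh (Suc k) - xh (Suc (Suc k)) = \<omega> *\<^sub>R F (xh (Suc k)) + \<gamma> *\<^sub>R (F (xh (Suc k)) - F (xh k))"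
    by (simp add: xh_Suc[of "Suc k"] xh_Suc[of k] x_Suc algebra_simps)
  then have "norm (xh (Suc (Suc k)) - xh (Suc k)) \<le> \<omega> * n + \<gamma> * d"
    using norm_triangle_ineq[of "\<omega> *\<^sub>R F (xh (Suc k))" "\<gamma> *\<^sub>R (F (xh (Suc k)) - F (xh k))"]
      omega_pos gamma_pos
    by (simp add: n_def d_def norm_minus_commute)
  then have "norm (F (xh (Suc (Suc k))) - F (xh (Suc k))) \<le> L * (\<omega> * n + \<gamma> * d)"
    using lipschitz[of "xh (Suc (Suc k))" "xh (Suc k)"] L_pos
    by (meson mult_left_mono order.trans less_imp_le)
  then have "(norm (F (xh (Suc (Suc k))) - F (xh (Suc k))))\<^sup>2 \<le> (L * \<omega> * n + L * \<gamma> * d)\<^sup>2"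
    by (simp add: power_mono algebra_simps)
  also have "\<dots> \<le> (L * \<omega> * n)\<^sup>2 / (1 - L * \<gamma>) + (L * \<gamma> * d)\<^sup>2 / (L * \<gamma>)"
    using power2_sum_le_weighted L_pos gamma_pos L_gamma_lt_1 by simp
  also have "\<dots> = L * \<gamma> * d\<^sup>2 + (L * \<omega>)\<^sup>2 / (1 - L * \<gamma>) * n\<^sup>2"
    using L_pos gamma_pos by (simp add: power2_eq_square field_simps)
  finally show ?thesis by (simp add: n_def d_def)
qed

definition weight :: real where
  "weight = 8 * \<omega> * \<gamma> / (7 * (1 - L * \<gamma>))"

definition lyapunov :: "nat \<Rightarrow> real" where
  "lyapunov k = (norm (x k - xstar))\<^sup>2 + weight * (norm (F (xh (Suc k)) - F (xh k)))\<^sup>2"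

lemma weight_pos: "0 < weight"
  using omega_pos gamma_pos L_gamma_lt_1 by (simp add: weight_def)

lemma weight_mult_one_minus: "weight * (1 - L * \<gamma>) = 8 / 7 * \<omega> * \<gamma>"
  using L_gamma_lt_1 by (simp add: weight_def field_simps)

lemma L_omega_le_quarter: "L * \<omega> / (1 - L * \<gamma>) \<le> 1 / 4"
  using L_gamma_omega_le_1 L_gamma_lt_1 by (simp add: field_simps)

lemma weight_mult_le: "weight * ((L * \<omega>)\<^sup>2 / (1 - L * \<gamma>)) \<le> \<omega> * \<gamma> / 14"
proof -
  have "0 \<le> L * \<omega> / (1 - L * \<gamma>)"
    using L_pos omega_pos L_gamma_lt_1 by simp
  then have quarter_sq: "(L * \<omega> / (1 - L * \<gamma>))\<^sup>2 \<le> (1 / 4)\<^sup>2"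
    by (rule power_mono[OF L_omega_le_quarter])
  have "weight * ((L * \<omega>)\<^sup>2 / (1 - L * \<gamma>)) = 8 / 7 * \<omega> * \<gamma> * (L * \<omega> / (1 - L * \<gamma>))\<^sup>2"
    using L_gamma_lt_1 by (simp add: weight_def power2_eq_square field_simps)
  also have "\<dots> \<le> 8 / 7 * \<omega> * \<gamma> * (1 / 4)\<^sup>2"
    using quarter_sq omega_pos gamma_pos by (intro mult_left_mono) auto
  also have "\<dots> = \<omega> * \<gamma> / 14"
    by (simp add: power2_eq_square)
  finally show ?thesis .
qed

lemma lyapunov_decrease:
  "lyapunov (Suc k) \<le> lyapunov k - 6 / 7 * \<omega> * \<gamma> * (norm (F (xh k)))\<^sup>2"
proof -
  define n0 where "n0 = (norm (F (xh k)))\<^sup>2"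
  define n1 where "n1 = (norm (F (xh (Suc k))))\<^sup>2"
  define D where "D = (norm (F (xh (Suc k)) - F (xh k)))\<^sup>2"
  define D' where "D' = (norm (F (xh (Suc (Suc k))) - F (xh (Suc k))))\<^sup>2"
  define P where "P = (L * \<omega>)\<^sup>2 / (1 - L * \<gamma>)"
  have "0 \<le> n0" "0 \<le> D" "0 \<le> weight * P"
    using weight_pos L_gamma_lt_1 by (simp_all add: n0_def D_def P_def)
  have "n1 \<le> 2 * n0 + 2 * D"
    unfolding n0_def n1_def D_def by (rule power2_norm_le_double)
  then have "weight * P * n1 \<le> weight * P * (2 * n0 + 2 * D)"
    using \<open>0 \<le> weight * P\<close> by (rule mult_left_mono)
  also have "\<dots> \<le> \<omega> * \<gamma> / 14 * (2 * n0 + 2 * D)"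
    using weight_mult_le \<open>0 \<le> n0\<close> \<open>0 \<le> D\<close> by (intro mult_right_mono) (simp_all add: P_def)
  finally have young_term: "weight * P * n1 \<le> \<omega> * \<gamma> / 7 * n0 + \<omega> * \<gamma> / 7 * D"
    by (simp add: algebra_simps)
  have "weight * D' \<le> weight * (L * \<gamma> * D + P * n1)"
    using operator_diff_sq_Suc_le[of k] weight_pos
    by (intro mult_left_mono) (simp_all add: D_def D'_def P_def n1_def)
  also have "\<dots> = weight * D - weight * (1 - L * \<gamma>) * D + weight * P * n1"
    by (simp add: algebra_simps)
  also have "\<dots> = weight * D - 8 / 7 * \<omega> * \<gamma> * D + weight * P * n1"
    by (simp only: weight_mult_one_minus)
  finally have "weight * D' \<le> weight * D - \<omega> * \<gamma> * D + \<omega> * \<gamma> / 7 * n0"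
    using young_term by (simp add: algebra_simps)
  moreover have "(norm (x (Suc k) - xstar))\<^sup>2 \<le> (norm (x k - xstar))\<^sup>2 - \<omega> * \<gamma> * n0 + \<omega> * \<gamma> * D"
    using dist_sq_Suc_le[of k] by (simp add: n0_def D_def)
  ultimately show ?thesis
    by (simp add: lyapunov_def n0_def D_def D'_def algebra_simps)
qed

lemma lyapunov_0_le: "lyapunov 0 \<le> 9 / 7 * (norm (x 0 - xstar))\<^sup>2"
proof -
  define r where "r = norm (x 0 - xstar)"
  have "norm (F (xh 1) - F (xh 0)) \<le> L * norm (xh 1 - xh 0)"
    by (rule lipschitz)
  also have "\<dots> = L * \<gamma> * norm (F (x 0))"
    using gamma_pos by (simp add: xh_Suc[of 0] xh_0)
  also have "\<dots> \<le> L * \<gamma> * (L * r)"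
    using lipschitz[of "x 0" xstar] L_pos gamma_pos by (simp add: root r_def)
  finally have "(norm (F (xh 1) - F (xh 0)))\<^sup>2 \<le> (L * \<gamma> * (L * r))\<^sup>2"
    by (simp add: power_mono)
  then have "weight * (norm (F (xh 1) - F (xh 0)))\<^sup>2 \<le> weight * (L * \<gamma> * (L * r))\<^sup>2"
    using weight_pos by simp
  also have "\<dots> = 8 / 7 * (L * \<omega> / (1 - L * \<gamma>)) * (L * \<gamma>) ^ 3 * r\<^sup>2"
    using L_gamma_lt_1 by (simp add: weight_def power2_eq_square power3_eq_cube field_simps)
  also have "\<dots> \<le> 8 / 7 * (1 / 4) * 1 * r\<^sup>2"
    using L_omega_le_quarter L_pos omega_pos gamma_pos L_gamma_lt_1
    by (intro mult_right_mono mult_mono mult_left_mono power_le_one) auto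
  finally show ?thesis
    by (simp add: lyapunov_def xh_0 r_def)
qed

lemma sum_norm_sq_le:
  "(\<Sum>k<n. (norm (F (xh k)))\<^sup>2) \<le> 3 / 2 * (norm (x 0 - xstar))\<^sup>2 / (\<omega> * \<gamma>)"
proof -
  have telescope: "lyapunov n + 6 / 7 * \<omega> * \<gamma> * (\<Sum>k<n. (norm (F (xh k)))\<^sup>2) \<le> lyapunov 0"
  proof (induction n)
    case (Suc n)
    then show ?case using lyapunov_decrease[of n] by (simp add: algebra_simps)
  qed simp
  have "0 \<le> lyapunov n"
    using weight_pos by (simp add: lyapunov_def)
  with telescope lyapunov_0_le
  have "\<omega> * \<gamma> * (\<Sum>k<n. (norm (F (xh k)))\<^sup>2) \<le> 3 / 2 * (norm (x 0 - xstar))\<^sup>2"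
    by linarith
  then show ?thesis
    using omega_pos gamma_pos by (simp add: field_simps)
qed

lemma Min_norm_sq_le:
  assumes "0 < n"
  shows "(MIN k\<in>{0..n-1}. (norm (F (xh (Suc k))))\<^sup>2) \<le> 3 / 2 * (norm (x 0 - xstar))\<^sup>2 / (\<omega> * \<gamma> * n)"
proof -
  define M where "M = (MIN k\<in>{0..n-1}. (norm (F (xh (Suc k))))\<^sup>2)"
  have "M \<le> (norm (F (xh (Suc k))))\<^sup>2" if "k < n" for k
    unfolding M_def using that by (intro Min_le) auto
  then have "n * M \<le> (\<Sum>k<n. (norm (F (xh (Suc k))))\<^sup>2)"
    using sum_bounded_below[of "{..<n}" M] by simp
  also have "\<dots> \<le> (\<Sum>k<Suc n. (norm (F (xh k)))\<^sup>2)"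
    unfolding sum.lessThan_Suc_shift by simp
  also have "\<dots> \<le> 3 / 2 * (norm (x 0 - xstar))\<^sup>2 / (\<omega> * \<gamma>)"
    by (rule sum_norm_sq_le)
  finally show ?thesis
    using assms omega_pos gamma_pos by (simp add: M_def field_simps)
qed

end

theorem corollary4p6:
  fixes F :: "real ^ 'd \<Rightarrow> real ^ 'd" and xstar x0 :: "real ^ 'd"
    and L \<rho> \<gamma> \<omega> :: real and K :: nat
  assumes L_pos: "L > 0"
    and lip: "\<And>x y. norm (F x - F y) \<le> L * norm (x - y)"
    and root: "F xstar = 0"
    and rho: "0 < \<rho>" "\<rho> < 1 / (2 * L)"
    and minty: "\<And>x. inner (F x) (x - xstar) \<ge> - \<rho> * (norm (F x))\<^sup>2"
    and gamma: "max (2 * \<rho>) (1 / (2 * L)) < \<gamma>" "\<gamma> < 1 / L"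
    and omega: "0 < \<omega>" "\<omega> < min (\<gamma> - 2 * \<rho>) (1 / (4 * L) - \<gamma> / 4)"
    and K: "K \<ge> 2"
  shows "(MIN k\<in>{0..K-1}. (norm (F (pe_xhat F \<gamma> \<omega> x0 k)))\<^sup>2)
           \<le> (48 / (\<omega> * \<gamma> * (1 - L * (\<gamma> + 4 * \<omega>)))) * (norm (x0 - xstar))\<^sup>2 / real (K - 1)"
proof -
  define m where "m = 1 - L * (\<gamma> + 4 * \<omega>)"
  have gamma_pos: "0 < \<gamma>" and m_pos: "0 < m"
    using gamma omega rho L_pos by (auto simp: m_def field_simps)
  interpret pe: past_extragradient_weak_minty F xstar L \<rho> \<gamma> \<omega>
      "pe_x F \<gamma> \<omega> x0" "\<lambda>k. snd (pe_state F \<gamma> \<omega> x0 k)"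
    using lip minty root L_pos gamma_pos m_pos gamma(2) omega
    by unfold_locales (auto simp del: pe_state.simps simp: pe_state_recurrence m_def field_simps)
  have "(MIN k\<in>{0..K-1}. (norm (F (pe_xhat F \<gamma> \<omega> x0 k)))\<^sup>2)
          \<le> 3 / 2 * (norm (x0 - xstar))\<^sup>2 / (\<omega> * \<gamma> * K)"
    using pe.Min_norm_sq_le[of K] K by (simp add: pe_xhat_def pe_x_def)
  also have "\<dots> \<le> 48 * (norm (x0 - xstar))\<^sup>2 / (\<omega> * \<gamma> * m * real (K - 1))"
  proof (rule frac_le)
    have "m * real (K - 1) \<le> 1 * real K"
      using m_pos K L_pos gamma_pos omega by (intro mult_mono) (auto simp: m_def)
    then show "\<omega> * \<gamma> * m * real (K - 1) \<le> \<omega> * \<gamma> * real K"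
      using omega gamma_pos by (simp add: mult.assoc)
  qed (use omega gamma_pos m_pos K in auto)
  finally show ?thesis
    by (simp add: m_def)
qed

end
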